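(* Let $d\ge2$ and let $\mathbf{p}^\star=(1,p_2^\star,\dots,p_d^\star)\in(0,\infty)^d$ be a maximizer over $\mathbf{p}\in(0,\infty)^d$ of $$\min_{k\in\{1,\dots,d\}}\frac{\prod_{i=1}^d p_i}{D_k(\mathbf{p})^d}.$$ Then $D(\mathbf{p}^\star):=\max_{k\in\{1,\dots,d\}}D_k(\mathbf{p}^\star)=D_1(\mathbf{p}^\star)$.
   Context: For $k\in\{1,\dots,d\}$ let $\mathbf{w}_k\in\mathbb{R}^d$ have entries $w_{k,i}=0$ for $i<k$, $w_{k,k}=k$, $w_{k,i}=i-1$ for $k<i\le d$, and set $D_k(\mathbf{p})=\sqrt{\sum_{i=1}^d w_{k,i}^2p_i^2}$. Thus e.g. $D_1(\mathbf{p})^2=p_1^2+p_2^2+4p_3^2+\dots+(d-1)^2p_d^2$ and $D_d(\mathbf{p})^2=d^2p_d^2$. *)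

theory Defs
  imports Complex_Main
begin

text \<open>Vectors in R^d are functions nat => real, relevant on indices 1..d.\<close>

definition wgt :: "nat \<Rightarrow> nat \<Rightarrow> real" where
  "wgt k i = (if i < k then 0 else if i = k then real k else real i - 1)"

definition Dk :: "nat \<Rightarrow> nat \<Rightarrow> (nat \<Rightarrow> real) \<Rightarrow> real" where
  "Dk d k p = sqrt (\<Sum>i=1..d. (wgt k i)^2 * (p i)^2)"

definition objective :: "nat \<Rightarrow> (nat \<Rightarrow> real) \<Rightarrow> real" where
  "objective d p = Min ((\<lambda>k. (\<Prod>i=1..d. p i) / (Dk d k p) ^ d) ` {1..d})"

definition Dmax :: "nat \<Rightarrow> (nat \<Rightarrow> real) \<Rightarrow> real" where
  "Dmax d p = Max ((\<lambda>k. Dk d k p) ` {1..d})"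

end

theory Submission
  imports Defs
begin

text \<open>
  Only \<open>D\<^sub>1\<close> depends on the first coordinate, because \<open>w\<^sub>k\<^sub>,\<^sub>1 = 0\<close> for \<open>k \<ge> 2\<close>.
  If \<open>D\<^sub>1(p) < D(p)\<close>, raising \<open>p\<^sub>1\<close> until \<open>D\<^sub>1\<close> reaches \<open>D(p)\<close> multiplies the product of
  the coordinates by a factor \<open>> 1\<close> while every \<open>D\<^sub>k\<close> stays at most \<open>D(p)\<close>; hence the
  objective, which lies between \<open>\<Prod>p\<^sub>i / D(p)\<^sup>d\<close> before and after, strictly increases.
  So at a maximiser \<open>D = D\<^sub>1\<close>.
\<close>

lemma Dk_pos:
  assumes "k \<in> {1..d}" "p k > 0"
  shows "Dk d k p > 0"
proof -
  have "(wgt k k)^2 * (p k)^2 \<le> (\<Sum>i=1..d. (wgt k i)^2 * (p i)^2)"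
    by (rule member_le_sum) (use assms in auto)
  moreover have "(wgt k k)^2 * (p k)^2 > 0"
    using assms by (auto simp: wgt_def)
  ultimately show ?thesis
    unfolding Dk_def by simp
qed

lemma Dk_square: "(Dk d k p)^2 = (\<Sum>i=1..d. (wgt k i)^2 * (p i)^2)"
  unfolding Dk_def by (simp add: sum_nonneg)

lemma Dk_fun_upd_1:
  assumes "k \<ge> 2"
  shows "Dk d k (p(1 := a)) = Dk d k p"
  unfolding Dk_def using assms by (intro arg_cong[where f = sqrt] sum.cong) (auto simp: wgt_def)

lemma Dk_1_fun_upd_1_square:
  assumes "d \<ge> 1"
  shows "(Dk d 1 (p(1 := a)))^2 = (Dk d 1 p)^2 - (p 1)^2 + a^2"
proof -
  let ?S = "\<lambda>p. \<Sum>i\<in>{1..d} - {1}. (wgt 1 i)^2 * (p i)^2"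
  have split: "(\<Sum>i=1..d. (wgt 1 i)^2 * (p i)^2) = (p 1)^2 + ?S p" for p :: "nat \<Rightarrow> real"
    using assms by (subst sum.remove[of _ 1]) (auto simp: wgt_def)
  have "?S (p(1 := a)) = ?S p" by (intro sum.cong) auto
  then show ?thesis
    unfolding Dk_square split by simp
qed

lemma prod_fun_upd_1:
  fixes d :: nat and p :: "nat \<Rightarrow> 'a::comm_monoid_mult"
  assumes "d \<ge> 1"
  shows "(\<Prod>i=1..d. (p(1 := a)) i) = a * (\<Prod>i\<in>{1..d} - {1}. p i)"
    and "(\<Prod>i=1..d. p i) = p 1 * (\<Prod>i\<in>{1..d} - {1}. p i)"
proof -
  have remove_1: "prod f {1..d} = f 1 * prod f ({1..d} - {1})" for f :: "nat \<Rightarrow> 'a"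
    using assms by (intro prod.remove) auto
  have "(\<Prod>i\<in>{1..d} - {1}. (p(1 := a)) i) = (\<Prod>i\<in>{1..d} - {1}. p i)"
    by (intro prod.cong) auto
  then show "(\<Prod>i=1..d. (p(1 := a)) i) = a * (\<Prod>i\<in>{1..d} - {1}. p i)"
    by (simp only: remove_1) simp
  show "(\<Prod>i=1..d. p i) = p 1 * (\<Prod>i\<in>{1..d} - {1}. p i)"
    by (rule remove_1)
qed

lemma Dk_le_Dmax:
  assumes "k \<in> {1..d}"
  shows "Dk d k p \<le> Dmax d p"
  unfolding Dmax_def using assms by (intro Max_ge) auto

lemma Dmax_attained:
  assumes "d \<ge> 1"
  obtains k where "k \<in> {1..d}" "Dk d k p = Dmax d p"
proof -
  have "Dmax d p \<in> (\<lambda>k. Dk d k p) ` {1..d}"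
    unfolding Dmax_def using assms by (intro Max_in) auto
  then show thesis using that by auto
qed

lemma objective_le:
  assumes "k \<in> {1..d}"
  shows "objective d p \<le> (\<Prod>i=1..d. p i) / (Dk d k p)^d"
  unfolding objective_def using assms by (intro Min_le) auto

lemma objective_ge:
  assumes "d \<ge> 1" "\<forall>i\<in>{1..d}. p i > 0"
    and "\<And>k. k \<in> {1..d} \<Longrightarrow> Dk d k p \<le> M"
  shows "(\<Prod>i=1..d. p i) / M^d \<le> objective d p"
  unfolding objective_def
proof (rule Min.boundedI)
  fix x assume "x \<in> (\<lambda>k. (\<Prod>i=1..d. p i) / (Dk d k p)^d) ` {1..d}"
  then obtain k where k: "k \<in> {1..d}" and x: "x = (\<Prod>i=1..d. p i) / (Dk d k p)^d"
    by auto
  have "Dk d k p > 0" using Dk_pos k assms(2) by blast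
  moreover have "(\<Prod>i=1..d. p i) > 0" using assms(2) by (intro prod_pos) auto
  moreover have "(Dk d k p)^d \<le> M^d"
    using assms(3)[OF k] \<open>Dk d k p > 0\<close> by (intro power_mono) auto
  moreover have "M > 0"
    using assms(3)[OF k] \<open>Dk d k p > 0\<close> by linarith
  ultimately show "(\<Prod>i=1..d. p i) / M^d \<le> x"
    unfolding x by (intro frac_le) auto
qed (use assms(1) in simp_all)

lemma objective_strictly_improvable:
  assumes "d \<ge> 1" "\<forall>i\<in>{1..d}. p i > 0" and "Dk d 1 p < Dmax d p"
  obtains q where "\<forall>i\<in>{1..d}. q i > 0" "objective d p < objective d q"
proof -
  define M where "M = Dmax d p"
  obtain k where k: "k \<in> {1..d}" "Dk d k p = M"
    using Dmax_attained[OF assms(1)] M_def by metis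
  have M_pos: "M > 0" using Dk_pos k assms(2) by metis
  have p1_pos: "p 1 > 0" using assms(1,2) by auto
  have "Dk d 1 p > 0"
    using assms(1) p1_pos by (intro Dk_pos) auto
  then have "(Dk d 1 p)^2 < M^2"
    using assms(3) unfolding M_def by (intro power_strict_mono) auto
  define a where "a = sqrt ((p 1)^2 + M^2 - (Dk d 1 p)^2)"
  have "0 \<le> (p 1)^2 + M^2 - (Dk d 1 p)^2"
    using \<open>(Dk d 1 p)^2 < M^2\<close> zero_le_power2[of "p 1"] by linarith
  then have a_sq: "a^2 = (p 1)^2 + M^2 - (Dk d 1 p)^2"
    unfolding a_def by simp
  have a_gt: "a > p 1"
    using \<open>(Dk d 1 p)^2 < M^2\<close> p1_pos unfolding a_def by (simp add: real_less_rsqrt)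
  define q where "q = p(1 := a)"
  have q_pos: "\<forall>i\<in>{1..d}. q i > 0"
    using assms(2) a_gt p1_pos unfolding q_def by auto
  have "(Dk d 1 q)^2 = M^2"
    unfolding q_def using Dk_1_fun_upd_1_square[OF assms(1)] a_sq by simp
  moreover have "Dk d 1 q > 0"
    using assms(1) q_pos by (intro Dk_pos) auto
  ultimately have "Dk d 1 q = M"
    using M_pos by (simp add: power2_eq_iff_nonneg)
  then have Dq_le: "Dk d j q \<le> M" if "j \<in> {1..d}" for j
    using that Dk_le_Dmax[of j d p] Dk_fun_upd_1[of j d p a]
    unfolding q_def M_def by (cases "j = 1") auto
  define R where "R = (\<Prod>i\<in>{1..d} - {1}. p i)"
  have R_pos: "R > 0" unfolding R_def using assms(2) by (intro prod_pos) auto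
  have "objective d p \<le> p 1 * R / M^d"
    using objective_le[OF k(1), of p] k(2) prod_fun_upd_1(2)[OF assms(1), of p]
    unfolding R_def by simp
  also have "\<dots> < a * R / M^d"
    using a_gt R_pos M_pos by (intro divide_strict_right_mono) auto
  also have "\<dots> \<le> objective d q"
    using objective_ge[OF assms(1) q_pos Dq_le] prod_fun_upd_1(1)[OF assms(1), of p a]
    unfolding q_def R_def by simp
  finally show thesis using that q_pos by blast
qed

theorem lemma4:
  fixes d :: nat and pstar :: "nat \<Rightarrow> real"
  assumes "d \<ge> 2"
    and "pstar 1 = 1"
    and "\<forall>i\<in>{1..d}. pstar i > 0"
    and "\<forall>p :: nat \<Rightarrow> real. (\<forall>i\<in>{1..d}. p i > 0) \<longrightarrow> objective d p \<le> objective d pstar"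
  shows "Dmax d pstar = Dk d 1 pstar"
proof -
  have "d \<ge> 1" using assms(1) by simp
  have "\<not> Dk d 1 pstar < Dmax d pstar"
  proof
    assume "Dk d 1 pstar < Dmax d pstar"
    then obtain q where "\<forall>i\<in>{1..d}. q i > 0" "objective d pstar < objective d q"
      using objective_strictly_improvable \<open>d \<ge> 1\<close> assms(3) by blast
    then show False using assms(4) by (meson not_le)
  qed
  moreover have "Dk d 1 pstar \<le> Dmax d pstar"
    using \<open>d \<ge> 1\<close> by (intro Dk_le_Dmax) simp
  ultimately show ?thesis by linarith
qed

end
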